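(* Let $\mathcal H$ be an infinite-dimensional separable Hilbert space with orthonormal basis $\{|\varphi_i\rangle\}_{i=1}^\infty$, and let $\big[\langle\varphi_i|\hat\varrho|\varphi_j\rangle\big]_{i,j=1}^{\infty}$ be an infinite complex matrix. This matrix represents a quantum state (i.e. is the matrix of a density operator in this basis) if and only if: (i) $\sum_{i,j=1}^{\infty}|\langle\varphi_i|\hat\varrho|\varphi_j\rangle|^2\le 1$; (ii) $\langle\varphi_i|\hat\varrho|\varphi_j\rangle=\overline{\langle\varphi_j|\hat\varrho|\varphi_i\rangle}$ for all $1\le i,j<\infty$; (iii) the series \[\big[\langle\varphi_i|\hat 1|\varphi_j\rangle\big]+\tfrac12\big[\langle\varphi_i|\hat\varrho-\hat1|\varphi_j\rangle\big]-\tfrac18\big[\langle\varphi_i|(\hat\varrho-\hat1)^2|\varphi_j\rangle\big]+\tfrac1{16}\big[\langle\varphi_i|(\hat\varrho-\hat1)^3|\varphi_j\rangle\big]+\dots+\frac{(-1)^{n+1}(2n-3)!!}{n!\,2^n}\big[\langle\varphi_i|(\hat\varrho-\hat1)^n|\varphi_j\rangle\big]+\dots\] is convergent in the (operator) norm to $\sqrt{\big[\langle\varphi_i|\hat\varrho|\varphi_j\rangle\big]}$; (iv) $\sum_{i=1}^{\infty}\langle\varphi_i|\hat\varrho|\varphi_i\rangle=1$.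
   Context: A density operator on $\mathcal H$ is an operator $\hat\varrho:\mathcal H\to\mathcal H$ defined on all of $\mathcal H$ which is positive, self-adjoint, and has trace $1$. When condition (i) holds, the matrix defines a unique Hilbert–Schmidt operator $\hat\varrho$ on $\mathcal H$ with the given matrix elements; powers refer to this operator, $\hat1$ is the identity, and all matrices are with respect to the basis $\{|\varphi_i\rangle\}$. *)

theory Defs
  imports "HOL-Analysis.Analysis"
begin

text \<open>The separable infinite-dimensional Hilbert space H is modelled concretely as
  l2(nat): square-summable sequences nat => complex, with orthonormal basis
  phi_i = basis_vec i (indices start at 0 instead of 1).  Operators are
  functions on sequences; only their behaviour on l2 matters.\<close>

type_synonym vec = "nat \<Rightarrow> complex"
type_synonym op = "vec \<Rightarrow> vec"

definition l2 :: "vec set" where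
  "l2 = {x. summable (\<lambda>i. (cmod (x i))\<^sup>2)}"

definition l2norm :: "vec \<Rightarrow> real" where
  "l2norm x = sqrt (\<Sum>i. (cmod (x i))\<^sup>2)"

definition l2inner :: "vec \<Rightarrow> vec \<Rightarrow> complex" where
  "l2inner x y = (\<Sum>i. cnj (x i) * y i)"

definition basis_vec :: "nat \<Rightarrow> vec" where
  "basis_vec j = (\<lambda>k. if k = j then 1 else 0)"

definition op_on_l2 :: "op \<Rightarrow> bool" where
  "op_on_l2 T \<longleftrightarrow> (\<forall>x\<in>l2. T x \<in> l2)
     \<and> (\<forall>x\<in>l2. \<forall>y\<in>l2. T (\<lambda>i. x i + y i) = (\<lambda>i. T x i + T y i))
     \<and> (\<forall>c. \<forall>x\<in>l2. T (\<lambda>i. c * x i) = (\<lambda>i. c * T x i))"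

definition self_adjoint_op :: "op \<Rightarrow> bool" where
  "self_adjoint_op T \<longleftrightarrow> (\<forall>x\<in>l2. \<forall>y\<in>l2. l2inner x (T y) = l2inner (T x) y)"

definition positive_op :: "op \<Rightarrow> bool" where
  "positive_op T \<longleftrightarrow> (\<forall>x\<in>l2. Im (l2inner x (T x)) = 0 \<and> 0 \<le> Re (l2inner x (T x)))"

definition density_op :: "op \<Rightarrow> bool" where
  "density_op T \<longleftrightarrow> op_on_l2 T \<and> positive_op T \<and> self_adjoint_op T
     \<and> (\<lambda>i. l2inner (basis_vec i) (T (basis_vec i))) sums 1"

definition represents_state :: "(nat \<Rightarrow> nat \<Rightarrow> complex) \<Rightarrow> bool" where
  "represents_state M \<longleftrightarrow> (\<exists>T. density_op T \<and>
     (\<forall>i j. l2inner (basis_vec i) (T (basis_vec j)) = M i j))"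

text \<open>The operator defined by the matrix M (well defined on l2 when M is Hilbert-Schmidt).\<close>
definition matop :: "(nat \<Rightarrow> nat \<Rightarrow> complex) \<Rightarrow> op" where
  "matop M x = (\<lambda>i. \<Sum>j. M i j * x j)"

text \<open>Double factorial, with 0!! = 1 (so that (2n-3)!! for n = 1, computed in nat, is (-1)!! = 1).\<close>
fun dfact :: "nat \<Rightarrow> nat" where
  "dfact 0 = 1"
| "dfact (Suc 0) = 1"
| "dfact (Suc (Suc n)) = Suc (Suc n) * dfact n"

definition sqrt_coeff :: "nat \<Rightarrow> real" where
  "sqrt_coeff n = (if n = 0 then 1 else
     (-1) ^ (n + 1) * real (dfact (2 * n - 3)) / (fact n * 2 ^ n))"

definition op_norm_tendsto :: "(nat \<Rightarrow> op) \<Rightarrow> op \<Rightarrow> bool" where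
  "op_norm_tendsto S L \<longleftrightarrow> (\<forall>\<epsilon>>0. \<exists>N. \<forall>n\<ge>N. \<forall>x\<in>l2.
       l2norm (\<lambda>i. S n x i - L x i) \<le> \<epsilon> * l2norm x)"

definition is_sqrt_op :: "op \<Rightarrow> op \<Rightarrow> bool" where
  "is_sqrt_op S T \<longleftrightarrow> op_on_l2 S \<and> positive_op S \<and> self_adjoint_op S
     \<and> (\<forall>x\<in>l2. S (S x) = T x)"

definition sqrt_partial :: "op \<Rightarrow> nat \<Rightarrow> op" where
  "sqrt_partial T N x = (\<lambda>i. \<Sum>n<N. complex_of_real (sqrt_coeff n) *
       (((\<lambda>y i. T y i - y i) ^^ n) x) i)"

end

theory Submission
  imports Defs "HOL-Computational_Algebra.Formal_Power_Series"
begin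

(* Let rho be a density operator and A = rho - 1.  Trace one and the Cauchy-Schwarz inequality for
   the form <x, rho y> give rho^2 <= rho, so A is a self-adjoint contraction with -1 <= A <= 0.
   The binomial coefficients c_n = (1/2 choose n) alternate in sign after c_0 with
   sum |c_n| <= 2, hence sum c_n A^n converges absolutely in operator norm to a self-adjoint S.
   S is positive because sum_{n<N} c_n (-1)^n >= 0 and 0 <= (-1)^n <x, A^n x> <= ||x||^2, and
   S^2 = 1 + A = rho by Vandermonde's identity for (1/2 choose n).  The matrix of rho is
   Hilbert-Schmidt since |rho_ij|^2 <= rho_ii rho_jj.  Conversely, the square of a positive
   self-adjoint operator is positive and self-adjoint, and trace one is condition (iv). *)

section \<open>Coefficients of the binomial series of the square root\<close>

lemma dfact_odd: "dfact (2 * m + 1) = (2 * m + 1) * dfact (2 * m - 1)"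
  by (cases m) (simp_all add: numeral_2_eq_2)

lemma sqrt_coeff_Suc: "sqrt_coeff (Suc k) = sqrt_coeff k * ((1/2 - real k) / real (Suc k))"
proof (cases k)
  case (Suc m)
  have "real (dfact (2 * Suc (Suc m) - 3)) = (2 * real m + 1) * real (dfact (2 * Suc m - 3))"
    using dfact_odd[of m] by (simp del: dfact.simps add: algebra_simps numeral_3_eq_3)
  then show ?thesis
    unfolding Suc sqrt_coeff_def by (simp add: field_simps)
qed (simp add: sqrt_coeff_def)

lemma sqrt_coeff_eq_gbinomial: "sqrt_coeff n = (1/2 :: real) gchoose n"
proof (induction n)
  case (Suc k)
  have "(1/2::real) * ((1/2) gchoose k) = real k * ((1/2) gchoose k) + real (Suc k) * ((1/2) gchoose Suc k)"
    by (rule gbinomial_mult_1)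
  then have "(1/2::real) gchoose Suc k = ((1/2) gchoose k) * ((1/2 - real k) / real (Suc k))"
    by (simp add: field_simps del: of_nat_Suc)
  with Suc show ?case by (simp add: sqrt_coeff_Suc)
qed (simp add: sqrt_coeff_def)

(* The coefficient identity behind (sqrt (1 + t))^2 = 1 + t. *)
lemma sqrt_coeff_convolution:
  "(\<Sum>j\<le>k. sqrt_coeff j * sqrt_coeff (k - j)) = (if k \<le> 1 then 1 else 0)"
proof -
  have "(\<Sum>j\<le>k. sqrt_coeff j * sqrt_coeff (k - j)) = (1/2 + 1/2 :: real) gchoose k"
    unfolding sqrt_coeff_eq_gbinomial atLeast0AtMost[symmetric] by (rule gbinomial_Vandermonde)
  also have "\<dots> = real (1 choose k)"
    using binomial_gbinomial[of 1 k, where 'a=real] by simp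
  finally show ?thesis
    by (cases k) (auto simp: binomial_eq_0)
qed

lemma sqrt_coeff_alternating_nonpos:
  assumes "n \<ge> 1" shows "sqrt_coeff n * (-1) ^ n \<le> 0"
proof -
  have "sqrt_coeff n * (-1) ^ n = - (real (dfact (2 * n - 3)) / (fact n * 2 ^ n))"
    using assms by (simp add: sqrt_coeff_def power_add flip: power_mult_distrib)
  then show ?thesis by simp
qed

lemma abs_sqrt_coeff:
  assumes "n \<ge> 1" shows "\<bar>sqrt_coeff n\<bar> = - (sqrt_coeff n * (-1) ^ n)"
proof -
  have "\<bar>sqrt_coeff n\<bar> = \<bar>sqrt_coeff n * (-1) ^ n\<bar>" by (simp add: abs_mult)
  then show ?thesis using sqrt_coeff_alternating_nonpos[OF assms] by simp
qed

lemma sum_sqrt_coeff_alternating: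
  "N \<ge> 1 \<Longrightarrow> (\<Sum>n<N. sqrt_coeff n * (-1) ^ n) = - 2 * real N * (sqrt_coeff N * (-1) ^ N)"
proof (induction N rule: dec_induct)
  case base then show ?case by (simp add: sqrt_coeff_def)
next
  case (step N)
  then show ?case by (simp add: sqrt_coeff_Suc field_simps)
qed

(* The partial sums of the series for sqrt (1 - 1) stay nonnegative. *)
lemma sum_sqrt_coeff_alternating_nonneg: "0 \<le> (\<Sum>n<N. sqrt_coeff n * (-1) ^ n)"
proof (cases "N \<ge> 1")
  case True
  then show ?thesis
    using sum_sqrt_coeff_alternating[OF True] sqrt_coeff_alternating_nonpos[OF True]
    by (simp add: mult_nonneg_nonpos)
qed (simp add: not_le less_one)

lemma sum_abs_sqrt_coeff_le: "(\<Sum>n<N. \<bar>sqrt_coeff n\<bar>) \<le> 2"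
proof (cases N)
  case (Suc K)
  have "(\<Sum>n<Suc K. \<bar>sqrt_coeff n\<bar>) = 1 + (\<Sum>n<K. \<bar>sqrt_coeff (Suc n)\<bar>)"
    by (simp only: sum.lessThan_Suc_shift) (simp add: sqrt_coeff_def)
  also have "\<dots> = 1 - (\<Sum>n<K. sqrt_coeff (Suc n) * (-1) ^ Suc n)"
    by (simp add: abs_sqrt_coeff sum_negf del: power_Suc)
  also have "\<dots> = 2 - (\<Sum>n<Suc K. sqrt_coeff n * (-1) ^ n)"
    by (simp only: sum.lessThan_Suc_shift) (simp add: sqrt_coeff_def)
  finally show ?thesis
    using Suc sum_sqrt_coeff_alternating_nonneg[of "Suc K"] by simp
qed simp

lemma summable_abs_sqrt_coeff: "summable (\<lambda>n. \<bar>sqrt_coeff n\<bar>)"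
  by (rule summableI_nonneg_bounded[where x=2]) (auto intro: sum_abs_sqrt_coeff_le)

lemma sum_sqrt_coeff_alternating_weighted_nonneg:
  assumes "\<And>n. 0 \<le> b n" and "\<And>n. b n \<le> b 0"
  shows "0 \<le> (\<Sum>n<N. sqrt_coeff n * (-1) ^ n * b n)"
proof -
  have "0 \<le> (\<Sum>n<N. (sqrt_coeff n * (-1) ^ n) * (b n - b 0))"
  proof (rule sum_nonneg)
    fix n
    show "0 \<le> sqrt_coeff n * (-1) ^ n * (b n - b 0)"
      using sqrt_coeff_alternating_nonpos[of n] assms(2)[of n]
      by (cases "n = 0") (auto intro: mult_nonpos_nonpos)
  qed
  also have "\<dots> = (\<Sum>n<N. sqrt_coeff n * (-1) ^ n * b n) - b 0 * (\<Sum>n<N. sqrt_coeff n * (-1) ^ n)"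
    by (simp add: sum_distrib_left sum_subtractf algebra_simps)
  finally show ?thesis
    using assms(1)[of 0] sum_sqrt_coeff_alternating_nonneg[of N]
    by (smt (verit) mult_nonneg_nonneg)
qed

section \<open>Absolutely convergent double series\<close>

lemma has_sum_products_nonneg:
  fixes a b :: "nat \<Rightarrow> real"
  assumes a: "\<And>n. 0 \<le> a n" "a sums A" and b: "\<And>n. 0 \<le> b n" "b sums B"
  shows "((\<lambda>(i, j). a i * b j) has_sum A * B) UNIV"
proof -
  have row: "((\<lambda>j. a i * b j) has_sum a i * B) UNIV" for i
    using b by (intro norm_summable_imp_has_sum sums_mult) (auto simp: sums_iff abs_mult a(1))
  have col: "((\<lambda>i. a i * B) has_sum A * B) UNIV"
    using a by (intro norm_summable_imp_has_sum sums_mult2) (auto simp: sums_iff abs_mult intro: summable_mult2)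
  have "(\<lambda>(i, j). a i * b j) summable_on UNIV \<times> UNIV"
  proof (rule summable_on_SigmaI[where g="\<lambda>i. a i * B"])
    show "((\<lambda>j. (\<lambda>(i, j). a i * b j) (i, j)) has_sum a i * B) UNIV" for i
      using row by simp
  qed (use col has_sum_imp_summable a b in auto)
  then show ?thesis
    using has_sum_SigmaI[where f="\<lambda>(i, j). a i * b j" and B="\<lambda>_. UNIV", OF _ col] row by simp
qed

lemma Cauchy_product_shifted_sums:
  fixes c a :: "nat \<Rightarrow> complex"
  assumes c: "summable (\<lambda>n. norm (c n))" and a: "\<And>k. norm (a k) \<le> B"
    and S: "(\<lambda>k. (\<Sum>j\<le>k. c j * c (k - j)) * a k) sums S"
  shows "(\<lambda>n. c n * (\<Sum>m. c m * a (n + m))) sums S"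
proof -
  define f where "f = (\<lambda>(n, m). c n * c m * a (n + m))"
  have "((\<lambda>(n, m). norm (c n) * norm (c m)) has_sum (\<Sum>n. norm (c n)) * (\<Sum>n. norm (c n))) UNIV"
    using c by (intro has_sum_products_nonneg) auto
  then have "(\<lambda>p. B * (\<lambda>(n, m). norm (c n) * norm (c m)) p) summable_on UNIV"
    by (intro summable_on_cmult_right) (rule has_sum_imp_summable)
  then have "(\<lambda>p. norm (f p)) summable_on UNIV"
  proof (rule summable_on_comparison_test)
    fix p :: "nat \<times> nat"
    show "norm (f p) \<le> B * (\<lambda>(n, m). norm (c n) * norm (c m)) p"
      using mult_left_mono[OF a, of "norm (c (fst p)) * norm (c (snd p))" "fst p + snd p"]
      by (auto simp: f_def norm_mult mult_ac split: prod.splits)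
  qed simp
  then obtain S' where f: "(f has_sum S') (UNIV \<times> UNIV)"
    using abs_summable_summable[of f UNIV] unfolding summable_on_def by auto
  have rows: "((\<lambda>m. f (n, m)) has_sum c n * (\<Sum>m. c m * a (n + m))) UNIV" for n
  proof -
    have row: "summable (\<lambda>m. norm (c m * a (n + m)))"
      using a by (intro summable_comparison_test[OF _ summable_mult2[OF c, of B]])
        (auto simp: norm_mult mult_left_mono)
    then have "summable (\<lambda>m. norm (f (n, m)))"
      using summable_mult[OF row, of "norm (c n)"] by (simp add: f_def norm_mult mult_ac)
    moreover have "(\<lambda>m. f (n, m)) sums (c n * (\<Sum>m. c m * a (n + m)))"
      using sums_mult[OF summable_sums[OF summable_norm_cancel[OF row]], of "c n"]
      by (simp add: f_def mult_ac)
    ultimately show ?thesis by (rule norm_summable_imp_has_sum)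
  qed
  have by_rows: "(\<lambda>n. c n * (\<Sum>m. c m * a (n + m))) sums S'"
    by (rule has_sum_imp_sums, rule has_sum_SigmaD[OF f rows])
  define g where "g = (\<lambda>(k, j). c j * c (k - j) * a k)"
  have "(g has_sum S') (SIGMA k:UNIV. {..k}) = (f has_sum S') UNIV"
    by (rule has_sum_reindex_bij_witness[where j="\<lambda>(k, j). (j, k - j)" and i="\<lambda>(n, m). (n + m, n)"])
      (auto simp: f_def g_def)
  then have g: "(g has_sum S') (SIGMA k:UNIV. {..k})"
    using f by simp
  have "((\<lambda>j. g (k, j)) has_sum (\<Sum>j\<le>k. c j * c (k - j)) * a k) {..k}" for k
    using has_sum_finite[of "{..k}" "\<lambda>j. g (k, j)"] by (simp add: g_def sum_distrib_right)
  then have "(\<lambda>k. (\<Sum>j\<le>k. c j * c (k - j)) * a k) sums S'"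
    by (intro has_sum_imp_sums has_sum_SigmaD[OF g])
  with S by_rows show ?thesis
    using sums_unique2 by blast
qed

section \<open>The sequence space l2\<close>

lemma l2D: "x \<in> l2 \<Longrightarrow> summable (\<lambda>i. (cmod (x i))\<^sup>2)"
  by (simp add: l2_def)

lemma l2I: "summable (\<lambda>i. (cmod (x i))\<^sup>2) \<Longrightarrow> x \<in> l2"
  by (simp add: l2_def)

lemma l2norm_nonneg: "x \<in> l2 \<Longrightarrow> 0 \<le> l2norm x"
  by (simp add: l2norm_def suminf_nonneg l2D)

lemma l2norm_squared: "x \<in> l2 \<Longrightarrow> (l2norm x)\<^sup>2 = (\<Sum>i. (cmod (x i))\<^sup>2)"
  unfolding l2norm_def by (intro real_sqrt_pow2 suminf_nonneg) (auto simp: l2D)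

lemma l2_add: assumes "x \<in> l2" "y \<in> l2" shows "(\<lambda>i. x i + y i) \<in> l2"
proof (rule l2I)
  have le: "(cmod (x i + y i))\<^sup>2 \<le> 2 * (cmod (x i))\<^sup>2 + 2 * (cmod (y i))\<^sup>2" for i
  proof -
    have "(cmod (x i + y i))\<^sup>2 \<le> (cmod (x i) + cmod (y i))\<^sup>2"
      by (simp add: power_mono norm_triangle_ineq)
    also have "\<dots> \<le> 2 * (cmod (x i))\<^sup>2 + 2 * (cmod (y i))\<^sup>2"
      using zero_le_power2[of "cmod (x i) - cmod (y i)"] by (simp add: power2_eq_square algebra_simps)
    finally show ?thesis .
  qed
  have "summable (\<lambda>i. 2 * (cmod (x i))\<^sup>2 + 2 * (cmod (y i))\<^sup>2)"
    using assms by (intro summable_add summable_mult l2D)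
  then show "summable (\<lambda>i. (cmod (x i + y i))\<^sup>2)"
    by (rule summable_comparison_test') (simp add: le)
qed

lemma l2_scale: assumes "x \<in> l2" shows "(\<lambda>i. c * x i) \<in> l2"
proof (rule l2I)
  have "summable (\<lambda>i. (cmod c)\<^sup>2 * (cmod (x i))\<^sup>2)" using l2D[OF assms] by (rule summable_mult)
  then show "summable (\<lambda>i. (cmod (c * x i))\<^sup>2)" by (simp add: norm_mult power_mult_distrib)
qed

lemma l2_uminus: assumes "x \<in> l2" shows "(\<lambda>i. - x i) \<in> l2"
  using l2_scale[OF assms, of "-1"] by simp

lemma l2_diff: assumes "x \<in> l2" "y \<in> l2" shows "(\<lambda>i. x i - y i) \<in> l2"
  using l2_add[OF assms(1) l2_uminus[OF assms(2)]] by simp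

lemma l2_zero: "(\<lambda>i. 0) \<in> l2"
  by (rule l2I) simp

lemma l2_sum: "(\<And>n. n \<in> A \<Longrightarrow> f n \<in> l2) \<Longrightarrow> (\<lambda>i. \<Sum>n\<in>A. f n i) \<in> l2"
proof (induction A rule: infinite_finite_induct)
  case (infinite A) then show ?case by (simp add: l2_zero)
next
  case empty then show ?case by (simp add: l2_zero)
next
  case (insert a A)
  then show ?case using l2_add[of "f a" "\<lambda>i. \<Sum>n\<in>A. f n i"] by simp
qed

lemma basis_vec_l2: "basis_vec j \<in> l2"
proof (rule l2I)
  have "(\<lambda>i. (cmod (basis_vec j i))\<^sup>2) = (\<lambda>i. if i = j then 1 else 0)"
    by (auto simp: basis_vec_def)
  then show "summable (\<lambda>i. (cmod (basis_vec j i))\<^sup>2)"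
    using sums_single[of j "\<lambda>_. 1::real"] by (simp add: sums_summable)
qed

lemma l2inner_abs_summable:
  assumes "x \<in> l2" "y \<in> l2"
  shows "summable (\<lambda>i. cmod (cnj (x i) * y i))"
proof (rule summable_comparison_test[OF _ summable_add[OF l2D[OF assms(1)] l2D[OF assms(2)]]])
  show "\<exists>N. \<forall>n\<ge>N. norm (cmod (cnj (x n) * y n)) \<le> (cmod (x n))\<^sup>2 + (cmod (y n))\<^sup>2"
  proof (intro exI allI impI)
    fix n
    have "cmod (x n) * cmod (y n) \<le> (cmod (x n))\<^sup>2 + (cmod (y n))\<^sup>2"
      using power2_diff[of "cmod (x n)" "cmod (y n)"]
        zero_le_power2[of "cmod (x n) - cmod (y n)"] zero_le_power2[of "cmod (x n)"]
        zero_le_power2[of "cmod (y n)"] by linarith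
    then show "norm (cmod (cnj (x n) * y n)) \<le> (cmod (x n))\<^sup>2 + (cmod (y n))\<^sup>2"
      by (simp add: norm_mult)
  qed
qed

lemma l2inner_summable:
  assumes "x \<in> l2" "y \<in> l2"
  shows "summable (\<lambda>i. cnj (x i) * y i)"
  using summable_norm_cancel[OF l2inner_abs_summable[OF assms]] .

lemma l2inner_add_right:
  assumes "x \<in> l2" "y \<in> l2" "z \<in> l2"
  shows "l2inner x (\<lambda>i. y i + z i) = l2inner x y + l2inner x z"
  unfolding l2inner_def
  using suminf_add[OF l2inner_summable[OF assms(1,2)] l2inner_summable[OF assms(1,3)]]
  by (simp add: distrib_left)

lemma l2inner_scale_right:
  assumes "x \<in> l2" "y \<in> l2"
  shows "l2inner x (\<lambda>i. c * y i) = c * l2inner x y"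
  unfolding l2inner_def
  using suminf_mult[OF l2inner_summable[OF assms], of c]
  by (simp add: algebra_simps)

lemma l2inner_commute_cnj:
  assumes "x \<in> l2" "y \<in> l2"
  shows "l2inner y x = cnj (l2inner x y)"
proof -
  have "(\<lambda>i. cnj (cnj (x i) * y i)) sums cnj (l2inner x y)"
    unfolding sums_cnj l2inner_def using l2inner_summable[OF assms] by (rule summable_sums)
  then show ?thesis unfolding l2inner_def by (simp add: sums_iff mult.commute)
qed

lemma l2inner_add_left:
  assumes "x \<in> l2" "y \<in> l2" "z \<in> l2"
  shows "l2inner (\<lambda>i. x i + y i) z = l2inner x z + l2inner y z"
  using l2inner_add_right[OF assms(3,1,2)] l2_add[OF assms(1,2)] assms
  by (simp add: l2inner_commute_cnj[of z])

lemma l2inner_scale_left: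
  assumes "x \<in> l2" "y \<in> l2"
  shows "l2inner (\<lambda>i. c * x i) y = cnj c * l2inner x y"
  using l2inner_scale_right[OF assms(2,1), of c] l2_scale[OF assms(1), of c] assms
  by (simp add: l2inner_commute_cnj[of y])

lemma l2inner_diff_right:
  assumes "x \<in> l2" "y \<in> l2" "z \<in> l2"
  shows "l2inner x (\<lambda>i. y i - z i) = l2inner x y - l2inner x z"
  using l2inner_add_right[OF assms(1,2) l2_uminus[OF assms(3)]]
    l2inner_scale_right[OF assms(1,3), of "-1"] by simp

lemma l2inner_diff_left:
  assumes "x \<in> l2" "y \<in> l2" "z \<in> l2"
  shows "l2inner (\<lambda>i. x i - y i) z = l2inner x z - l2inner y z"
  using l2inner_add_left[OF assms(1) l2_uminus[OF assms(2)] assms(3)]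
    l2inner_scale_left[OF assms(2,3), of "-1"] by simp

lemma l2inner_self:
  assumes "x \<in> l2"
  shows "l2inner x x = complex_of_real ((l2norm x)\<^sup>2)"
proof -
  have "(\<lambda>i. cnj (x i) * x i) = (\<lambda>i. complex_of_real ((cmod (x i))\<^sup>2))"
    by (auto simp: complex_mult_cnj cmod_def mult.commute)
  then have "l2inner x x = (\<Sum>i. complex_of_real ((cmod (x i))\<^sup>2))"
    by (simp only: l2inner_def)
  also have "\<dots> = complex_of_real (\<Sum>i. (cmod (x i))\<^sup>2)"
    by (rule suminf_of_real[OF l2D[OF assms], symmetric])
  finally show ?thesis by (simp only: l2norm_squared[OF assms])
qed

lemma L2_set_le_l2norm: assumes "x \<in> l2" "finite A" shows "L2_set (\<lambda>i. cmod (x i)) A \<le> l2norm x"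
proof -
  have "(\<Sum>i\<in>A. (cmod (x i))\<^sup>2) \<le> (\<Sum>i. (cmod (x i))\<^sup>2)"
    by (rule sum_le_suminf[OF l2D[OF assms(1)] assms(2)]) auto
  then show ?thesis unfolding L2_set_def l2norm_def by simp
qed

lemma suminf_norm_inner_le:
  assumes "x \<in> l2" "y \<in> l2"
  shows "(\<Sum>i. cmod (cnj (x i) * y i)) \<le> l2norm x * l2norm y"
proof (rule suminf_le_const[OF l2inner_abs_summable[OF assms]])
  fix n
  have "(\<Sum>i<n. cmod (cnj (x i) * y i)) = (\<Sum>i<n. \<bar>cmod (x i)\<bar> * \<bar>cmod (y i)\<bar>)"
    by (simp add: norm_mult)
  also have "\<dots> \<le> L2_set (\<lambda>i. cmod (x i)) {..<n} * L2_set (\<lambda>i. cmod (y i)) {..<n}"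
    by (rule L2_set_mult_ineq)
  also have "\<dots> \<le> l2norm x * l2norm y"
    by (intro mult_mono L2_set_le_l2norm assms l2norm_nonneg) (auto simp: L2_set_def sum_nonneg)
  finally show "(\<Sum>i<n. cmod (cnj (x i) * y i)) \<le> l2norm x * l2norm y" .
qed

lemma l2_Cauchy_Schwarz:
  assumes "x \<in> l2" "y \<in> l2"
  shows "cmod (l2inner x y) \<le> l2norm x * l2norm y"
  unfolding l2inner_def
  using summable_norm[OF l2inner_abs_summable[OF assms]] suminf_norm_inner_le[OF assms] by linarith

lemma norm_component_le_l2norm:
  assumes "x \<in> l2" shows "cmod (x i) \<le> l2norm x"
  using L2_set_le_l2norm[OF assms, of "{i}"] by (simp add: L2_set_def)

lemma l2norm_diff_squared:
  assumes "x \<in> l2" "y \<in> l2"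
  shows "(l2norm (\<lambda>i. x i - y i))\<^sup>2 = (l2norm x)\<^sup>2 - 2 * Re (l2inner x y) + (l2norm y)\<^sup>2"
proof -
  have d: "(\<lambda>i. x i - y i) \<in> l2" using assms by (rule l2_diff)
  have "complex_of_real ((l2norm (\<lambda>i. x i - y i))\<^sup>2) = l2inner (\<lambda>i. x i - y i) (\<lambda>i. x i - y i)"
    using l2inner_self[OF d] by simp
  also have "\<dots> = l2inner x x - l2inner y x - (l2inner x y - l2inner y y)"
    by (simp add: l2inner_diff_left l2inner_diff_right assms d)
  also have "\<dots> = complex_of_real ((l2norm x)\<^sup>2 - 2 * Re (l2inner x y) + (l2norm y)\<^sup>2)"
    using assms by (simp add: l2inner_self l2inner_commute_cnj[of x y] complex_eq_iff)
  finally show ?thesis by (simp only: of_real_eq_iff)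
qed

lemma l2norm_add_squared:
  assumes "x \<in> l2" "y \<in> l2"
  shows "(l2norm (\<lambda>i. x i + y i))\<^sup>2 = (l2norm x)\<^sup>2 + 2 * Re (l2inner x y) + (l2norm y)\<^sup>2"
  using l2norm_diff_squared[OF assms(1) l2_uminus[OF assms(2)]]
    l2inner_scale_right[OF assms, of "-1"] by (simp add: l2norm_def)

lemma l2norm_triangle:
  assumes "x \<in> l2" "y \<in> l2"
  shows "l2norm (\<lambda>i. x i + y i) \<le> l2norm x + l2norm y"
proof -
  have "Re (l2inner x y) \<le> l2norm x * l2norm y"
    using l2_Cauchy_Schwarz[OF assms] complex_Re_le_cmod[of "l2inner x y"] by linarith
  hence "(l2norm (\<lambda>i. x i + y i))\<^sup>2 \<le> (l2norm x + l2norm y)\<^sup>2"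
    by (simp add: l2norm_add_squared[OF assms] power2_sum)
  then show ?thesis
    by (rule power2_le_imp_le) (intro add_nonneg_nonneg l2norm_nonneg assms)
qed

lemma l2norm_scale:
  assumes "x \<in> l2" shows "l2norm (\<lambda>i. c * x i) = cmod c * l2norm x"
proof -
  have "(\<Sum>i. (cmod (c * x i))\<^sup>2) = (cmod c)\<^sup>2 * (\<Sum>i. (cmod (x i))\<^sup>2)"
    by (simp add: norm_mult power_mult_distrib suminf_mult[OF l2D[OF assms]])
  then show ?thesis unfolding l2norm_def by (simp add: real_sqrt_mult)
qed

lemma l2norm_uminus: "l2norm (\<lambda>i. - x i) = l2norm x"
  by (simp add: l2norm_def)

lemma l2inner_basis_vec_left: "l2inner (basis_vec j) y = y j"
proof -
  have "(\<lambda>k. cnj (basis_vec j k) * y k) = (\<lambda>k. if k = j then y k else 0)"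
    by (auto simp: basis_vec_def)
  then show ?thesis unfolding l2inner_def using sums_single[of j y] by (simp add: sums_iff)
qed

lemma l2norm_zero: "l2norm (\<lambda>i. 0) = 0"
  by (simp add: l2norm_def)

lemma l2norm_sum:
  assumes "\<And>n. n \<in> F \<Longrightarrow> f n \<in> l2"
  shows "l2norm (\<lambda>i. \<Sum>n\<in>F. f n i) \<le> (\<Sum>n\<in>F. l2norm (f n))"
  using assms
proof (induction F rule: infinite_finite_induct)
  case (infinite A) then show ?case by (simp add: l2norm_zero)
next
  case empty then show ?case by (simp add: l2norm_zero)
next
  case (insert a A)
  have "l2norm (\<lambda>i. \<Sum>n\<in>insert a A. f n i) = l2norm (\<lambda>i. f a i + (\<Sum>n\<in>A. f n i))"
    using insert by simp
  also have "\<dots> \<le> l2norm (f a) + l2norm (\<lambda>i. \<Sum>n\<in>A. f n i)"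
    using insert by (intro l2norm_triangle l2_sum) auto
  also have "\<dots> \<le> l2norm (f a) + (\<Sum>n\<in>A. l2norm (f n))"
    using insert by simp
  finally show ?case using insert by simp
qed

lemma sum_squares_le_l2norm_squared:
  assumes "x \<in> l2" shows "(\<Sum>i<K. (cmod (x i))\<^sup>2) \<le> (l2norm x)\<^sup>2"
  unfolding l2norm_squared[OF assms] by (rule sum_le_suminf[OF l2D[OF assms]]) auto

lemma op_on_l2D:
  assumes "op_on_l2 L"
  shows "x \<in> l2 \<Longrightarrow> L x \<in> l2"
    "x \<in> l2 \<Longrightarrow> y \<in> l2 \<Longrightarrow> L (\<lambda>i. x i + y i) = (\<lambda>i. L x i + L y i)"
    "x \<in> l2 \<Longrightarrow> L (\<lambda>i. c * x i) = (\<lambda>i. c * L x i)"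
  using assms unfolding op_on_l2_def by auto

lemma op_on_l2_diff:
  assumes "op_on_l2 L" "x \<in> l2" "y \<in> l2"
  shows "L (\<lambda>i. x i - y i) = (\<lambda>i. L x i - L y i)"
  using op_on_l2D(2)[OF assms(1,2) l2_scale[OF assms(3), of "-1"]]
    op_on_l2D(3)[OF assms(1,3), of "-1"] by simp

section \<open>Norm-convergent series in l2\<close>

definition vec_suminf :: "(nat \<Rightarrow> vec) \<Rightarrow> vec" where
  "vec_suminf f = (\<lambda>i. \<Sum>n. f n i)"

lemma summable_norm_component:
  assumes "\<And>n. f n \<in> l2" "summable (\<lambda>n. l2norm (f n))"
  shows "summable (\<lambda>n. norm (f n i))"
  by (rule summable_comparison_test[OF _ assms(2)]) (auto intro: norm_component_le_l2norm assms(1))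

lemma sum_squares_vec_suminf_le:
  assumes f: "\<And>n. f n \<in> l2" and s: "summable (\<lambda>n. l2norm (f n))"
  shows "(\<Sum>i<K. (cmod (vec_suminf f i))\<^sup>2) \<le> (\<Sum>n. l2norm (f n))\<^sup>2"
proof (rule LIMSEQ_le_const2)
  show "(\<lambda>M. \<Sum>i<K. (cmod (\<Sum>n<M. f n i))\<^sup>2) \<longlonglongrightarrow> (\<Sum>i<K. (cmod (vec_suminf f i))\<^sup>2)"
    unfolding vec_suminf_def
  proof (rule tendsto_sum)
    fix i
    have "(\<lambda>M. \<Sum>n<M. f n i) \<longlonglongrightarrow> (\<Sum>n. f n i)"
      by (rule summable_LIMSEQ, rule summable_norm_cancel, rule summable_norm_component[OF f s])
    then show "(\<lambda>M. (cmod (\<Sum>n<M. f n i))\<^sup>2) \<longlonglongrightarrow> (cmod (\<Sum>n. f n i))\<^sup>2"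
      by (intro tendsto_power tendsto_norm)
  qed
  show "\<exists>N. \<forall>M\<ge>N. (\<Sum>i<K. (cmod (\<Sum>n<M. f n i))\<^sup>2) \<le> (\<Sum>n. l2norm (f n))\<^sup>2"
  proof (intro exI allI impI)
    fix M :: nat
    have w: "(\<lambda>i. \<Sum>n<M. f n i) \<in> l2" by (intro l2_sum f)
    have "l2norm (\<lambda>i. \<Sum>n<M. f n i) \<le> (\<Sum>n<M. l2norm (f n))" by (rule l2norm_sum) (rule f)
    also have "\<dots> \<le> (\<Sum>n. l2norm (f n))"
      by (rule sum_le_suminf[OF s]) (auto intro: l2norm_nonneg f)
    finally have "(l2norm (\<lambda>i. \<Sum>n<M. f n i))\<^sup>2 \<le> (\<Sum>n. l2norm (f n))\<^sup>2"
      by (rule power_mono) (rule l2norm_nonneg[OF w])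
    then show "(\<Sum>i<K. (cmod (\<Sum>n<M. f n i))\<^sup>2) \<le> (\<Sum>n. l2norm (f n))\<^sup>2"
      using sum_squares_le_l2norm_squared[OF w, of K] by linarith
  qed
qed

lemma vec_suminf_l2:
  assumes f: "\<And>n. f n \<in> l2" and s: "summable (\<lambda>n. l2norm (f n))"
  shows "vec_suminf f \<in> l2" "l2norm (vec_suminf f) \<le> (\<Sum>n. l2norm (f n))"
proof -
  note bound = sum_squares_vec_suminf_le[OF f s]
  have sm: "summable (\<lambda>i. (cmod (vec_suminf f i))\<^sup>2)"
    by (rule summableI_nonneg_bounded) (simp, rule bound)
  then show "vec_suminf f \<in> l2" by (rule l2I)
  have "(\<Sum>i. (cmod (vec_suminf f i))\<^sup>2) \<le> (\<Sum>n. l2norm (f n))\<^sup>2"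
    by (rule suminf_le_const[OF sm bound])
  then have "l2norm (vec_suminf f) \<le> sqrt ((\<Sum>n. l2norm (f n))\<^sup>2)"
    unfolding l2norm_def by (rule real_sqrt_le_mono)
  then show "l2norm (vec_suminf f) \<le> (\<Sum>n. l2norm (f n))"
    using suminf_nonneg[OF s l2norm_nonneg[OF f]] by simp
qed

lemma partial_sum_minus_vec_suminf:
  assumes f: "\<And>n. f n \<in> l2" and s: "summable (\<lambda>n. l2norm (f n))"
  shows "(\<lambda>i. (\<Sum>n<N. f n i) - vec_suminf f i) \<in> l2"
    "l2norm (\<lambda>i. (\<Sum>n<N. f n i) - vec_suminf f i) \<le> (\<Sum>n. l2norm (f (n + N)))"
proof -
  have f': "\<And>n. f (n + N) \<in> l2" using f .
  have s': "summable (\<lambda>n. l2norm (f (n + N)))" using summable_ignore_initial_segment[OF s] .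
  have eq: "(\<lambda>i. (\<Sum>n<N. f n i) - vec_suminf f i) = (\<lambda>i. - vec_suminf (\<lambda>n. f (n + N)) i)"
  proof
    fix i
    have "vec_suminf f i = (\<Sum>n. f (n + N) i) + (\<Sum>n<N. f n i)"
      unfolding vec_suminf_def
      by (rule suminf_split_initial_segment[OF summable_norm_cancel[OF summable_norm_component[OF f s]]])
    then show "(\<Sum>n<N. f n i) - vec_suminf f i = - vec_suminf (\<lambda>n. f (n + N)) i" by (simp add: vec_suminf_def)
  qed
  show "(\<lambda>i. (\<Sum>n<N. f n i) - vec_suminf f i) \<in> l2" unfolding eq by (intro l2_uminus vec_suminf_l2 f' s')
  show "l2norm (\<lambda>i. (\<Sum>n<N. f n i) - vec_suminf f i) \<le> (\<Sum>n. l2norm (f (n + N)))"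
    unfolding eq l2norm_uminus by (rule vec_suminf_l2(2)[OF f' s'])
qed

lemma suminf_tail_tendsto_zero:
  assumes "summable (g :: nat \<Rightarrow> real)"
  shows "(\<lambda>N. \<Sum>n. g (n + N)) \<longlonglongrightarrow> 0"
proof (rule LIMSEQ_I)
  fix r :: real assume "0 < r"
  from suminf_exist_split[OF this assms] obtain N where "\<forall>n\<ge>N. norm (\<Sum>i. g (i + n)) < r" by blast
  then show "\<exists>no. \<forall>n\<ge>no. norm ((\<Sum>i. g (i + n)) - 0) < r" by auto
qed

lemma linear_functional_sum:
  assumes add: "\<And>x y. x \<in> l2 \<Longrightarrow> y \<in> l2 \<Longrightarrow> \<phi> (\<lambda>i. x i + y i) = \<phi> x + \<phi> y"
    and scale: "\<And>c x. x \<in> l2 \<Longrightarrow> \<phi> (\<lambda>i. c * x i) = c * \<phi> x"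
    and f: "\<And>n. n \<in> F \<Longrightarrow> f n \<in> l2"
  shows "\<phi> (\<lambda>i. \<Sum>n\<in>F. f n i) = (\<Sum>n\<in>F. \<phi> (f n))"
  using f
proof (induction F rule: infinite_finite_induct)
  case (insert a A)
  then show ?case using add[of "f a" "\<lambda>i. \<Sum>n\<in>A. f n i"] l2_sum[of A f] by simp
qed (use scale[OF l2_zero, of 0] in simp_all)

lemma bounded_linear_functional_sums:
  assumes add: "\<And>x y. x \<in> l2 \<Longrightarrow> y \<in> l2 \<Longrightarrow> \<phi> (\<lambda>i. x i + y i) = \<phi> x + \<phi> y"
    and scale: "\<And>c x. x \<in> l2 \<Longrightarrow> \<phi> (\<lambda>i. c * x i) = c * \<phi> x"
    and bound: "\<And>x. x \<in> l2 \<Longrightarrow> cmod (\<phi> x) \<le> C * l2norm x"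
    and f: "\<And>n. f n \<in> l2" and s: "summable (\<lambda>n. l2norm (f n))"
  shows "(\<lambda>n. \<phi> (f n)) sums \<phi> (vec_suminf f)"
  unfolding sums_def
proof (rule LIM_zero_cancel, rule Lim_null_comparison)
  show "(\<lambda>N. \<bar>C\<bar> * (\<Sum>n. l2norm (f (n + N)))) \<longlonglongrightarrow> 0"
    using tendsto_mult_right_zero[OF suminf_tail_tendsto_zero[OF s]] .
  show "\<forall>\<^sub>F N in sequentially.
      norm ((\<Sum>n<N. \<phi> (f n)) - \<phi> (vec_suminf f)) \<le> \<bar>C\<bar> * (\<Sum>n. l2norm (f (n + N)))"
  proof (rule always_eventually, rule allI)
    fix N
    define r where "r = (\<lambda>i. (\<Sum>n<N. f n i) - vec_suminf f i)"
    have r: "r \<in> l2"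
      unfolding r_def by (rule partial_sum_minus_vec_suminf(1)[OF f s])
    have "(\<Sum>n<N. \<phi> (f n)) = \<phi> (\<lambda>i. (\<Sum>n<N. f n i))"
      by (rule linear_functional_sum[OF add scale f, symmetric])
    also have "\<dots> = \<phi> (\<lambda>i. r i + vec_suminf f i)"
      by (simp add: r_def)
    also have "\<dots> = \<phi> r + \<phi> (vec_suminf f)"
      by (rule add[OF r vec_suminf_l2(1)[OF f s]])
    finally have "norm ((\<Sum>n<N. \<phi> (f n)) - \<phi> (vec_suminf f)) \<le> C * l2norm r"
      using bound[OF r] by simp
    also have "\<dots> \<le> \<bar>C\<bar> * l2norm r"
      by (intro mult_right_mono l2norm_nonneg r) simp
    also have "\<dots> \<le> \<bar>C\<bar> * (\<Sum>n. l2norm (f (n + N)))"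
      unfolding r_def by (intro mult_left_mono partial_sum_minus_vec_suminf(2)[OF f s]) simp
    finally show "norm ((\<Sum>n<N. \<phi> (f n)) - \<phi> (vec_suminf f)) \<le> \<bar>C\<bar> * (\<Sum>n. l2norm (f (n + N)))" .
  qed
qed

lemma l2inner_vec_suminf_sums:
  assumes "x \<in> l2" and "\<And>n. f n \<in> l2" and "summable (\<lambda>n. l2norm (f n))"
  shows "(\<lambda>n. l2inner x (f n)) sums l2inner x (vec_suminf f)"
  using assms
  by (intro bounded_linear_functional_sums[where C="l2norm x"])
    (auto intro: l2inner_add_right l2inner_scale_right l2_Cauchy_Schwarz)

lemma op_vec_suminf_sums:
  assumes L: "op_on_l2 L" and contraction: "\<And>z. z \<in> l2 \<Longrightarrow> l2norm (L z) \<le> l2norm z"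
    and "\<And>n. f n \<in> l2" and "summable (\<lambda>n. l2norm (f n))"
  shows "(\<lambda>n. L (f n) i) sums L (vec_suminf f) i"
proof (rule bounded_linear_functional_sums[where C=1])
  show "cmod (L z i) \<le> 1 * l2norm z" if "z \<in> l2" for z
    using norm_component_le_l2norm[OF op_on_l2D(1)[OF L that], of i] contraction[OF that] by simp
qed (use assms op_on_l2D[OF L] in auto)

section \<open>Positive operators\<close>

lemma op_on_l2_funpow:
  assumes "op_on_l2 L" shows "op_on_l2 (L ^^ n)"
  by (induction n) (use assms in \<open>auto simp: op_on_l2_def\<close>)

lemma le_mult_if_quadratic_nonneg:
  fixes a P Q :: real
  assumes q: "\<And>t. 0 \<le> t * t * a * P - 2 * t * a + Q" and "0 \<le> P"
  shows "a \<le> P * Q"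
proof (cases "P = 0")
  case True
  show ?thesis
  proof (rule ccontr)
    assume "\<not> a \<le> P * Q"
    then have "0 < a" using True by simp
    have "0 \<le> (Q + 1) / (2 * a) * ((Q + 1) / (2 * a)) * a * P - 2 * ((Q + 1) / (2 * a)) * a + Q"
      by (rule q)
    also have "\<dots> = -1" using \<open>0 < a\<close> True by (simp add: field_simps)
    finally show False by simp
  qed
next
  case False
  then have "0 < P" using \<open>0 \<le> P\<close> by simp
  have "0 \<le> (1 / P) * (1 / P) * a * P - 2 * (1 / P) * a + Q" by (rule q)
  also have "\<dots> = (P * Q - a) / P" using \<open>0 < P\<close> by (simp add: field_simps power2_eq_square)
  finally show ?thesis using \<open>0 < P\<close> by (simp add: zero_le_divide_iff)
qed

locale positive_self_adjoint_op =
  fixes R :: op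
  assumes linear: "op_on_l2 R" and positive: "positive_op R" and self_adjoint: "self_adjoint_op R"
begin

lemma maps_l2: "x \<in> l2 \<Longrightarrow> R x \<in> l2"
  using op_on_l2D(1)[OF linear] .

lemma inner_commute: "x \<in> l2 \<Longrightarrow> y \<in> l2 \<Longrightarrow> l2inner x (R y) = l2inner (R x) y"
  using self_adjoint by (simp add: self_adjoint_op_def)

lemma form_real: "x \<in> l2 \<Longrightarrow> Im (l2inner x (R x)) = 0"
  and form_nonneg: "x \<in> l2 \<Longrightarrow> 0 \<le> Re (l2inner x (R x))"
  using positive by (simp_all add: positive_op_def)

lemma form_scale_diff:
  assumes x: "x \<in> l2" and y: "y \<in> l2"
  shows "l2inner (\<lambda>i. s * y i - x i) (R (\<lambda>i. s * y i - x i))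
    = cnj s * s * l2inner y (R y) - cnj s * l2inner y (R x) - s * l2inner x (R y) + l2inner x (R x)"
proof -
  define v where "v = (\<lambda>i. s * y i - x i)"
  have sy: "(\<lambda>i. s * y i) \<in> l2" by (rule l2_scale[OF y])
  have v: "v \<in> l2" unfolding v_def by (rule l2_diff[OF sy x])
  have sRy: "(\<lambda>i. s * R y i) \<in> l2" by (rule l2_scale[OF maps_l2[OF y]])
  have Rv: "R v = (\<lambda>i. s * R y i - R x i)"
    unfolding v_def using op_on_l2_diff[OF linear sy x] op_on_l2D(3)[OF linear y, of s] by simp
  have "l2inner v (R v) = cnj s * l2inner y (R v) - l2inner x (R v)"
    using l2inner_diff_left[OF sy x maps_l2[OF v]] l2inner_scale_left[OF y maps_l2[OF v]]
    by (simp add: v_def[symmetric])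
  also have "l2inner y (R v) = s * l2inner y (R y) - l2inner y (R x)"
    unfolding Rv
    using l2inner_diff_right[OF y sRy maps_l2[OF x]] l2inner_scale_right[OF y maps_l2[OF y]] by simp
  also have "l2inner x (R v) = s * l2inner x (R y) - l2inner x (R x)"
    unfolding Rv
    using l2inner_diff_right[OF x sRy maps_l2[OF x]] l2inner_scale_right[OF x maps_l2[OF y]] by simp
  finally show ?thesis
    unfolding v_def by (simp add: algebra_simps)
qed

lemma form_Cauchy_Schwarz:
  assumes x: "x \<in> l2" and y: "y \<in> l2"
  shows "(cmod (l2inner y (R x)))\<^sup>2 \<le> Re (l2inner y (R y)) * Re (l2inner x (R x))"
proof -
  define m where "m = l2inner y (R x)"
  define a where "a = (cmod m)\<^sup>2"
  have mm: "cnj m * m = complex_of_real a" unfolding a_def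
    by (metis complex_norm_square mult.commute of_real_power)
  have xRy: "l2inner x (R y) = cnj m"
    unfolding m_def using inner_commute[OF x y] l2inner_commute_cnj[OF y maps_l2[OF x]] by simp
  (* positivity of the form at t m y - x, for every real t *)
  have "0 \<le> t * t * a * Re (l2inner y (R y)) - 2 * t * a + Re (l2inner x (R x))" for t :: real
  proof -
    define s where "s = complex_of_real t * m"
    have "l2inner (\<lambda>i. s * y i - x i) (R (\<lambda>i. s * y i - x i))
        = complex_of_real (t * t * a) * l2inner y (R y) - complex_of_real (2 * t * a) + l2inner x (R x)"
      unfolding form_scale_diff[OF x y] xRy m_def[symmetric] s_def
      by (simp add: algebra_simps mm[symmetric])
    then show ?thesis
      using form_nonneg[OF l2_diff[OF l2_scale[OF y] x], of s] by simp
  qed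
  then have "a \<le> Re (l2inner y (R y)) * Re (l2inner x (R x))"
    by (rule le_mult_if_quadratic_nonneg) (rule form_nonneg[OF y])
  then show ?thesis by (simp add: a_def m_def)
qed

end

(* The operator inequality R^2 <= R.  For positive R it is equivalent to R <= 1, but in this
   form it shows directly that R - 1 is a contraction. *)
locale effect_op = positive_self_adjoint_op +
  assumes norm_squared_le_form: "x \<in> l2 \<Longrightarrow> (l2norm (R x))\<^sup>2 \<le> Re (l2inner x (R x))"

lemma density_op_iff: "density_op R \<longleftrightarrow> positive_self_adjoint_op R
    \<and> (\<lambda>i. l2inner (basis_vec i) (R (basis_vec i))) sums 1"
  by (auto simp: density_op_def positive_self_adjoint_op_def)

(* |(R x)_i|^2 <= R_ii <x, R x> by Cauchy-Schwarz, and the diagonal entries R_ii sum to one. *)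
lemma effect_op_if_density_op:
  assumes "density_op R" shows "effect_op R"
proof -
  interpret positive_self_adjoint_op R using assms by (simp add: density_op_iff)
  define d where "d = (\<lambda>i. Re (l2inner (basis_vec i) (R (basis_vec i))))"
  have d: "d sums 1"
    unfolding d_def using sums_Re assms by (fastforce simp: density_op_def)
  show ?thesis
  proof unfold_locales
    fix x assume x: "x \<in> l2"
    have "(cmod (R x i))\<^sup>2 \<le> d i * Re (l2inner x (R x))" for i
      using form_Cauchy_Schwarz[OF x basis_vec_l2, of i] by (simp add: l2inner_basis_vec_left d_def)
    then have "(\<Sum>i. (cmod (R x i))\<^sup>2) \<le> (\<Sum>i. d i * Re (l2inner x (R x)))"
      by (rule suminf_le[OF _ l2D[OF maps_l2[OF x]] summable_mult2[OF sums_summable[OF d]]])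
    also have "\<dots> = Re (l2inner x (R x))"
      using sums_unique[OF sums_mult2[OF d, of "Re (l2inner x (R x))"]] by simp
    finally show "(l2norm (R x))\<^sup>2 \<le> Re (l2inner x (R x))"
      by (simp add: l2norm_squared[OF maps_l2[OF x]])
  qed
qed

section \<open>The square root series\<close>

definition op_minus_id :: "op \<Rightarrow> op" where
  "op_minus_id R = (\<lambda>y i. R y i - y i)"

definition sqrt_term :: "op \<Rightarrow> vec \<Rightarrow> nat \<Rightarrow> vec" where
  "sqrt_term R x n = (\<lambda>i. complex_of_real (sqrt_coeff n) * (op_minus_id R ^^ n) x i)"

definition sqrt_op :: "op \<Rightarrow> op" where
  "sqrt_op R x = vec_suminf (sqrt_term R x)"

lemma sqrt_partial_eq_sum_sqrt_term: "sqrt_partial R N x = (\<lambda>i. \<Sum>n<N. sqrt_term R x n i)"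
  by (simp add: sqrt_partial_def sqrt_term_def op_minus_id_def)

context effect_op
begin

abbreviation A :: op where "A \<equiv> op_minus_id R"

lemma form_le_norm_squared:
  assumes x: "x \<in> l2"
  shows "Re (l2inner x (R x)) \<le> (l2norm x)\<^sup>2"
proof -
  define q where "q = Re (l2inner x (R x))"
  have q0: "0 \<le> q" unfolding q_def by (rule form_nonneg[OF x])
  have "q \<le> cmod (l2inner x (R x))" unfolding q_def by (rule complex_Re_le_cmod)
  also have "\<dots> \<le> l2norm x * l2norm (R x)" by (rule l2_Cauchy_Schwarz[OF x maps_l2[OF x]])
  finally have q1: "q \<le> l2norm x * l2norm (R x)" .
  have q2: "(l2norm (R x))\<^sup>2 \<le> q" unfolding q_def by (rule norm_squared_le_form[OF x])
  have n0: "0 \<le> l2norm x" "0 \<le> l2norm (R x)" using l2norm_nonneg x maps_l2 by auto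
  have "q * q \<le> (l2norm x)\<^sup>2 * (l2norm (R x))\<^sup>2"
    using mult_mono[OF q1 q1 mult_nonneg_nonneg[OF n0] q0] by (simp add: power2_eq_square mult_ac)
  also have "\<dots> \<le> (l2norm x)\<^sup>2 * q" by (intro mult_left_mono q2) simp
  finally have "q * q \<le> (l2norm x)\<^sup>2 * q" .
  then show ?thesis unfolding q_def[symmetric]
    using q0 by (cases "q = 0") (auto simp: mult_le_cancel_right)
qed

lemma op_minus_id_linear: "op_on_l2 A"
  unfolding op_on_l2_def op_minus_id_def
  using op_on_l2D[OF linear] by (auto intro: l2_diff simp: algebra_simps)

lemma op_minus_id_maps_l2: "x \<in> l2 \<Longrightarrow> A x \<in> l2" using op_on_l2D(1)[OF op_minus_id_linear] .

lemma norm_op_minus_id_le: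
  assumes x: "x \<in> l2" shows "l2norm (A x) \<le> l2norm x"
proof -
  have "(l2norm (A x))\<^sup>2 = (l2norm (R x))\<^sup>2 - 2 * Re (l2inner (R x) x) + (l2norm x)\<^sup>2"
    unfolding op_minus_id_def by (rule l2norm_diff_squared[OF maps_l2[OF x] x])
  also have "l2inner (R x) x = l2inner x (R x)" using inner_commute[OF x x] by simp
  finally have "(l2norm (A x))\<^sup>2 \<le> (l2norm x)\<^sup>2"
    using norm_squared_le_form[OF x] form_nonneg[OF x] by linarith
  then show ?thesis by (rule power2_le_imp_le) (rule l2norm_nonneg[OF x])
qed

lemma op_minus_id_inner_commute: "x \<in> l2 \<Longrightarrow> y \<in> l2 \<Longrightarrow> l2inner x (A y) = l2inner (A x) y"
  unfolding op_minus_id_def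
  by (simp add: l2inner_diff_right l2inner_diff_left maps_l2 inner_commute)

lemma op_minus_id_form:
  assumes x: "x \<in> l2"
  shows "Im (- l2inner x (A x)) = 0" "0 \<le> Re (- l2inner x (A x))"
    "Re (- l2inner x (A x)) \<le> (l2norm x)\<^sup>2"
proof -
  have e: "l2inner x (A x) = l2inner x (R x) - complex_of_real ((l2norm x)\<^sup>2)"
    unfolding op_minus_id_def by (simp add: l2inner_diff_right x maps_l2 l2inner_self)
  show "Im (- l2inner x (A x)) = 0" unfolding e using form_real[OF x] by simp
  show "0 \<le> Re (- l2inner x (A x))" unfolding e using form_le_norm_squared[OF x] by simp
  show "Re (- l2inner x (A x)) \<le> (l2norm x)\<^sup>2" unfolding e using form_nonneg[OF x] by simp
qed

lemma op_on_l2_pow: "op_on_l2 (A ^^ n)"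
  by (rule op_on_l2_funpow[OF op_minus_id_linear])

lemma pow_maps_l2: "x \<in> l2 \<Longrightarrow> (A ^^ n) x \<in> l2" using op_on_l2D(1)[OF op_on_l2_pow] .

lemma norm_pow_le: "x \<in> l2 \<Longrightarrow> l2norm ((A ^^ n) x) \<le> l2norm x"
proof (induction n)
  case (Suc n)
  then show ?case using norm_op_minus_id_le[OF pow_maps_l2[OF Suc.prems, of n]] by simp
qed simp

lemma pow_inner_commute: "x \<in> l2 \<Longrightarrow> y \<in> l2 \<Longrightarrow> l2inner x ((A ^^ n) y) = l2inner ((A ^^ n) x) y"
proof (induction n arbitrary: x)
  case (Suc n)
  have "l2inner x ((A ^^ Suc n) y) = l2inner (A x) ((A ^^ n) y)"
    using op_minus_id_inner_commute[OF Suc.prems(1) pow_maps_l2[OF Suc.prems(2)]] by simp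
  also have "\<dots> = l2inner ((A ^^ n) (A x)) y"
    by (rule Suc.IH[OF op_minus_id_maps_l2[OF Suc.prems(1)] Suc.prems(2)])
  finally show ?case by (simp add: funpow_swap1)
qed simp

lemma form_pow_split:
  assumes x: "x \<in> l2"
  shows "l2inner x ((A ^^ (k + j + k)) x) = l2inner ((A ^^ k) x) ((A ^^ j) ((A ^^ k) x))"
  using pow_inner_commute[OF x pow_maps_l2[OF x], of k "j + k"] by (simp add: funpow_add)

(* With y = (R - 1)^k x, the signed form is ||y||^2 for n = 2k and <y, (1 - R) y> for n = 2k + 1. *)
lemma alternating_form_pow:
  fixes n :: nat
  assumes x: "x \<in> l2"
  defines "w \<equiv> (-1) ^ n * l2inner x ((A ^^ n) x)"
  shows "Im w = 0" "0 \<le> Re w" "Re w \<le> (l2norm x)\<^sup>2"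
proof -
  define k where "k = n div 2"
  define y where "y = (A ^^ k) x"
  have y: "y \<in> l2" unfolding y_def by (rule pow_maps_l2[OF x])
  have "(l2norm y)\<^sup>2 \<le> (l2norm x)\<^sup>2"
    unfolding y_def by (intro power_mono norm_pow_le x l2norm_nonneg pow_maps_l2)
  moreover have "w = complex_of_real ((l2norm y)\<^sup>2) \<and> even n \<or> w = - l2inner y (A y) \<and> odd n"
  proof (cases "even n")
    case True
    then have "n = k + 0 + k" unfolding k_def by presburger
    then show ?thesis
      using True form_pow_split[OF x, of k 0] l2inner_self[OF y] by (simp add: w_def y_def)
  next
    case False
    then have "n = k + 1 + k" unfolding k_def by presburger
    then show ?thesis
      using False form_pow_split[OF x, of k 1] by (simp add: w_def y_def)
  qed
  ultimately show "Im w = 0" "0 \<le> Re w" "Re w \<le> (l2norm x)\<^sup>2"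
    using op_minus_id_form[OF y] by auto
qed

lemma sqrt_term_l2: "x \<in> l2 \<Longrightarrow> sqrt_term R x n \<in> l2"
  unfolding sqrt_term_def by (intro l2_scale pow_maps_l2)

lemma l2norm_sqrt_term_le: assumes x: "x \<in> l2" shows "l2norm (sqrt_term R x n) \<le> \<bar>sqrt_coeff n\<bar> * l2norm x"
  unfolding sqrt_term_def l2norm_scale[OF pow_maps_l2[OF x]]
  by (simp add: mult_left_mono norm_pow_le x)

lemma summable_l2norm_sqrt_term: assumes x: "x \<in> l2" shows "summable (\<lambda>n. l2norm (sqrt_term R x n))"
proof (rule summable_comparison_test[OF _ summable_mult2[OF summable_abs_sqrt_coeff, of "l2norm x"]])
  show "\<exists>N. \<forall>n\<ge>N. norm (l2norm (sqrt_term R x n)) \<le> \<bar>sqrt_coeff n\<bar> * l2norm x"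
    using l2norm_sqrt_term_le[OF x] l2norm_nonneg[OF sqrt_term_l2[OF x]] by auto
qed

lemma summable_sqrt_term_component: "x \<in> l2 \<Longrightarrow> summable (\<lambda>n. sqrt_term R x n i)"
  by (rule summable_norm_cancel, rule summable_norm_component[OF sqrt_term_l2 summable_l2norm_sqrt_term])

lemma sqrt_op_maps_l2: "x \<in> l2 \<Longrightarrow> sqrt_op R x \<in> l2"
  unfolding sqrt_op_def by (rule vec_suminf_l2(1)[OF sqrt_term_l2 summable_l2norm_sqrt_term])

lemma sqrt_partial_tendsto: "op_norm_tendsto (sqrt_partial R) (sqrt_op R)"
  unfolding op_norm_tendsto_def
proof (intro allI impI)
  fix e :: real assume e: "0 < e"
  obtain N0 where N0: "\<forall>N\<ge>N0. norm (\<Sum>n. \<bar>sqrt_coeff (n + N)\<bar>) < e"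
    using suminf_exist_split[OF e summable_abs_sqrt_coeff] by blast
  show "\<exists>N0. \<forall>N\<ge>N0. \<forall>x\<in>l2. l2norm (\<lambda>i. sqrt_partial R N x i - sqrt_op R x i) \<le> e * l2norm x"
  proof (intro exI allI impI ballI)
    fix N x assume N: "N0 \<le> N" and x: "x \<in> l2"
    note terms = sqrt_term_l2[OF x] summable_l2norm_sqrt_term[OF x]
    note tail = summable_ignore_initial_segment[OF summable_abs_sqrt_coeff]
    have "l2norm (\<lambda>i. sqrt_partial R N x i - sqrt_op R x i)
        = l2norm (\<lambda>i. (\<Sum>n<N. sqrt_term R x n i) - vec_suminf (sqrt_term R x) i)"
      by (simp add: sqrt_partial_eq_sum_sqrt_term sqrt_op_def)
    also have "\<dots> \<le> (\<Sum>n. l2norm (sqrt_term R x (n + N)))"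
      by (rule partial_sum_minus_vec_suminf(2)[OF terms])
    also have "\<dots> \<le> (\<Sum>n. \<bar>sqrt_coeff (n + N)\<bar> * l2norm x)"
      by (rule suminf_le[OF l2norm_sqrt_term_le[OF x] summable_ignore_initial_segment[OF terms(2)]
            summable_mult2[OF tail]])
    also have "\<dots> = (\<Sum>n. \<bar>sqrt_coeff (n + N)\<bar>) * l2norm x"
      by (rule suminf_mult2[symmetric, OF tail])
    also have "\<dots> \<le> e * l2norm x"
      using N0 N by (intro mult_right_mono l2norm_nonneg x) auto
    finally show "l2norm (\<lambda>i. sqrt_partial R N x i - sqrt_op R x i) \<le> e * l2norm x" .
  qed
qed

lemma sqrt_op_add:
  assumes x: "x \<in> l2" and y: "y \<in> l2"
  shows "sqrt_op R (\<lambda>i. x i + y i) = (\<lambda>i. sqrt_op R x i + sqrt_op R y i)"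
proof
  fix i
  have "sqrt_term R (\<lambda>i. x i + y i) n i = sqrt_term R x n i + sqrt_term R y n i" for n
    unfolding sqrt_term_def using op_on_l2D(2)[OF op_on_l2_pow x y, of n] by (simp add: algebra_simps)
  then show "sqrt_op R (\<lambda>i. x i + y i) i = sqrt_op R x i + sqrt_op R y i"
    unfolding sqrt_op_def vec_suminf_def
    using suminf_add[OF summable_sqrt_term_component[OF x] summable_sqrt_term_component[OF y]] by simp
qed

lemma sqrt_op_scale:
  assumes x: "x \<in> l2"
  shows "sqrt_op R (\<lambda>i. c * x i) = (\<lambda>i. c * sqrt_op R x i)"
proof
  fix i
  have "sqrt_term R (\<lambda>i. c * x i) n i = c * sqrt_term R x n i" for n
    unfolding sqrt_term_def using op_on_l2D(3)[OF op_on_l2_pow x, of n c] by (simp add: algebra_simps)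
  then show "sqrt_op R (\<lambda>i. c * x i) i = c * sqrt_op R x i"
    unfolding sqrt_op_def vec_suminf_def
    using suminf_mult[OF summable_sqrt_term_component[OF x], of c] by simp
qed

lemma sqrt_op_linear: "op_on_l2 (sqrt_op R)"
  unfolding op_on_l2_def using sqrt_op_maps_l2 sqrt_op_add sqrt_op_scale by blast

lemma sqrt_op_inner_sums:
  assumes x: "x \<in> l2" and y: "y \<in> l2"
  shows "(\<lambda>n. complex_of_real (sqrt_coeff n) * l2inner x ((A ^^ n) y)) sums l2inner x (sqrt_op R y)"
proof -
  have "l2inner x (sqrt_term R y n) = complex_of_real (sqrt_coeff n) * l2inner x ((A ^^ n) y)" for n
    unfolding sqrt_term_def by (rule l2inner_scale_right[OF x pow_maps_l2[OF y]])
  then show ?thesis using l2inner_vec_suminf_sums[OF x sqrt_term_l2[OF y] summable_l2norm_sqrt_term[OF y]]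
    by (simp add: sqrt_op_def)
qed

lemma sqrt_op_inner_commute:
  assumes x: "x \<in> l2" and y: "y \<in> l2"
  shows "l2inner x (sqrt_op R y) = l2inner (sqrt_op R x) y"
proof -
  have "(\<lambda>n. cnj (complex_of_real (sqrt_coeff n) * l2inner y ((A ^^ n) x))) sums cnj (l2inner y (sqrt_op R x))"
    unfolding sums_cnj by (rule sqrt_op_inner_sums[OF y x])
  moreover have "cnj (l2inner y ((A ^^ n) x)) = l2inner x ((A ^^ n) y)" for n
    using l2inner_commute_cnj[OF y pow_maps_l2[OF x], of n] pow_inner_commute[OF x y, of n] by simp
  ultimately have "(\<lambda>n. complex_of_real (sqrt_coeff n) * l2inner x ((A ^^ n) y)) sums cnj (l2inner y (sqrt_op R x))"
    by simp
  then have "l2inner x (sqrt_op R y) = cnj (l2inner y (sqrt_op R x))"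
    using sums_unique2[OF sqrt_op_inner_sums[OF x y]] by simp
  then show ?thesis using l2inner_commute_cnj[OF y sqrt_op_maps_l2[OF x]] by simp
qed

(* The n-th term is (c_n (-1)^n) ((-1)^n <x, (R - 1)^n x>): the second factor is real and lies in
   [0, ||x||^2], so sum_sqrt_coeff_alternating_weighted_nonneg makes every partial sum nonnegative. *)
lemma sqrt_op_form:
  assumes x: "x \<in> l2"
  shows "Im (l2inner x (sqrt_op R x)) = 0" "0 \<le> Re (l2inner x (sqrt_op R x))"
proof -
  define w where "w = (\<lambda>n. (-1) ^ n * l2inner x ((A ^^ n) x))"
  define p where "p = (\<lambda>N. \<Sum>n<N. complex_of_real (sqrt_coeff n * (-1) ^ n) * w n)"
  have "(\<lambda>n. complex_of_real (sqrt_coeff n * (-1) ^ n) * w n) sums l2inner x (sqrt_op R x)"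
    using sqrt_op_inner_sums[OF x x] by (simp add: w_def mult.assoc flip: power_add)
  then have lim: "p \<longlonglongrightarrow> l2inner x (sqrt_op R x)"
    by (simp add: sums_def p_def)
  have Im_w: "Im (w n) = 0" for n
    unfolding w_def by (rule alternating_form_pow(1)[OF x])
  have "Im (p N) = 0" for N
    by (simp add: p_def Im_w)
  then show "Im (l2inner x (sqrt_op R x)) = 0"
    using tendsto_Im[OF lim] by (simp add: LIMSEQ_const_iff)
  have "0 \<le> Re (p N)" for N
  proof -
    have "Re (p N) = (\<Sum>n<N. sqrt_coeff n * (-1) ^ n * Re (w n))"
      by (simp add: p_def Im_w)
    also have "\<dots> \<ge> 0"
    proof (rule sum_sqrt_coeff_alternating_weighted_nonneg)
      show "0 \<le> Re (w n)" for n
        unfolding w_def by (rule alternating_form_pow(2)[OF x])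
      show "Re (w n) \<le> Re (w 0)" for n
        using alternating_form_pow(3)[OF x, of n] by (simp add: w_def l2inner_self x)
    qed
    finally show ?thesis .
  qed
  then show "0 \<le> Re (l2inner x (sqrt_op R x))"
    by (intro LIMSEQ_le_const[OF tendsto_Re[OF lim]]) blast
qed

lemma pow_sqrt_op_component:
  assumes x: "x \<in> l2"
  shows "(A ^^ n) (sqrt_op R x) i = (\<Sum>m. complex_of_real (sqrt_coeff m) * (A ^^ (n + m)) x i)"
proof -
  have "(\<lambda>m. (A ^^ n) (sqrt_term R x m) i) sums (A ^^ n) (sqrt_op R x) i"
    unfolding sqrt_op_def
    by (rule op_vec_suminf_sums[OF op_on_l2_pow norm_pow_le sqrt_term_l2[OF x] summable_l2norm_sqrt_term[OF x]])
  moreover have "(A ^^ n) (sqrt_term R x m) i = complex_of_real (sqrt_coeff m) * (A ^^ (n + m)) x i" for m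
    unfolding sqrt_term_def using op_on_l2D(3)[OF op_on_l2_pow pow_maps_l2[OF x], of n _ m]
    by (simp add: funpow_add)
  ultimately show ?thesis by (simp add: sums_iff)
qed

(* Expanding S (S x) as a double series and regrouping it by total degree k, the coefficient of
   (R - 1)^k x is the convolution of sqrt_coeff with itself, which vanishes for k >= 2. *)
lemma sqrt_op_sqrt_op:
  assumes x: "x \<in> l2"
  shows "sqrt_op R (sqrt_op R x) = R x"
proof
  fix i
  define a where "a = (\<lambda>k. (A ^^ k) x i)"
  define c where "c = (\<lambda>n. complex_of_real (sqrt_coeff n))"
  have "summable (\<lambda>n. norm (c n))"
    unfolding c_def using summable_abs_sqrt_coeff by simp
  moreover have "norm (a k) \<le> l2norm x" for k
    unfolding a_def using norm_component_le_l2norm[OF pow_maps_l2[OF x], of k i] norm_pow_le[OF x, of k]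
    by simp
  moreover have "(\<lambda>k. (\<Sum>j\<le>k. c j * c (k - j)) * a k) sums (a 0 + a 1)"
  proof -
    have conv: "(\<Sum>j\<le>k. c j * c (k - j)) = (if k \<le> 1 then 1 else 0)" for k
      unfolding c_def using sqrt_coeff_convolution[of k] by (simp flip: of_real_mult of_real_sum)
    have "(\<lambda>k. (\<Sum>j\<le>k. c j * c (k - j)) * a k) sums (\<Sum>k\<in>{0, 1}. (\<Sum>j\<le>k. c j * c (k - j)) * a k)"
      by (rule sums_finite) (auto simp: conv)
    then show ?thesis by (simp add: conv)
  qed
  ultimately have "(\<lambda>n. c n * (\<Sum>m. c m * a (n + m))) sums (a 0 + a 1)"
    by (rule Cauchy_product_shifted_sums)
  moreover have "sqrt_op R (sqrt_op R x) i = (\<Sum>n. c n * (\<Sum>m. c m * a (n + m)))"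
    using pow_sqrt_op_component[OF x]
    by (simp add: sqrt_op_def[of R "sqrt_op R x"] vec_suminf_def sqrt_term_def a_def c_def)
  moreover have "a 0 + a 1 = R x i"
    by (simp add: a_def op_minus_id_def)
  ultimately show "sqrt_op R (sqrt_op R x) i = R x i"
    by (simp add: sums_iff)
qed

lemma is_sqrt_op_sqrt_op: "is_sqrt_op (sqrt_op R) R"
  unfolding is_sqrt_op_def positive_op_def self_adjoint_op_def
  using sqrt_op_linear sqrt_op_form sqrt_op_inner_commute sqrt_op_sqrt_op by blast

end

section \<open>Matrices of density operators\<close>

lemma summable_on_le_products:
  fixes g :: "nat \<times> nat \<Rightarrow> real"
  assumes d: "\<And>i. 0 \<le> d i" "d sums s"
    and g: "\<And>p. 0 \<le> g p" "\<And>i j. g (i, j) \<le> d i * d j"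
  shows "g summable_on UNIV" "infsum g UNIV \<le> s * s"
proof -
  have prod: "((\<lambda>(i, j). d i * d j) has_sum s * s) UNIV"
    using has_sum_products_nonneg[OF d d] by simp
  show gs: "g summable_on UNIV"
    by (rule summable_on_comparison_test[OF has_sum_imp_summable[OF prod]]) (auto simp: g)
  show "infsum g UNIV \<le> s * s"
  proof -
    have "infsum g UNIV \<le> (\<Sum>\<^sub>\<infinity>(i, j). d i * d j)"
    proof (rule infsum_mono[OF gs has_sum_imp_summable[OF prod]])
      show "g p \<le> (\<lambda>(i, j). d i * d j) p" for p
        using g(2)[of "fst p" "snd p"] by (simp add: case_prod_beta)
    qed
    then show ?thesis using infsumI[OF prod] by simp
  qed
qed

lemma (in positive_self_adjoint_op) matrix_hermitian:
  "l2inner (basis_vec i) (R (basis_vec j)) = cnj (l2inner (basis_vec j) (R (basis_vec i)))"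
  using inner_commute[OF basis_vec_l2 basis_vec_l2, of i j]
    l2inner_commute_cnj[of "basis_vec j" "R (basis_vec i)"] by (simp add: basis_vec_l2 maps_l2)

lemma (in positive_self_adjoint_op) matop_matrix:
  assumes x: "x \<in> l2"
  shows "matop (\<lambda>i j. l2inner (basis_vec i) (R (basis_vec j))) x = R x"
proof
  fix i
  have "R x i = l2inner (R (basis_vec i)) x"
    using inner_commute[OF basis_vec_l2 x, of i] by (simp add: l2inner_basis_vec_left)
  also have "\<dots> = matop (\<lambda>i j. l2inner (basis_vec i) (R (basis_vec j))) x i"
  proof -
    have "cnj (R (basis_vec i) k) = l2inner (basis_vec i) (R (basis_vec k))" for k
      using matrix_hermitian[of k i] by (simp add: l2inner_basis_vec_left)
    then show ?thesis
      unfolding l2inner_def matop_def by simp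
  qed
  finally show "matop (\<lambda>i j. l2inner (basis_vec i) (R (basis_vec j))) x i = R x i" ..
qed

lemma density_op_cong:
  assumes T: "density_op T" and eq: "\<And>x. x \<in> l2 \<Longrightarrow> L x = T x"
  shows "density_op L"
proof -
  have "op_on_l2 L"
    using T eq l2_add l2_scale by (auto simp: density_op_def op_on_l2_def)
  moreover have "positive_op L"
    using T eq by (simp add: density_op_def positive_op_def)
  moreover have "self_adjoint_op L"
    using T eq by (simp add: density_op_def self_adjoint_op_def)
  moreover have "(\<lambda>i. l2inner (basis_vec i) (L (basis_vec i))) sums 1"
    using T eq basis_vec_l2 by (simp add: density_op_def)
  ultimately show ?thesis by (simp add: density_op_def)
qed

lemma matop_basis_vec: "l2inner (basis_vec i) (matop M (basis_vec j)) = M i j"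
proof -
  have "(\<lambda>k. M i k * basis_vec j k) = (\<lambda>k. if k = j then M i k else 0)"
    by (auto simp: basis_vec_def)
  then show ?thesis
    unfolding matop_def l2inner_basis_vec_left using sums_single[of j "M i"] by (simp add: sums_iff)
qed

lemma represents_state_iff_density_op_matop: "represents_state M \<longleftrightarrow> density_op (matop M)"
proof
  assume "represents_state M"
  then obtain R where R: "density_op R" and "\<And>i j. l2inner (basis_vec i) (R (basis_vec j)) = M i j"
    unfolding represents_state_def by blast
  then have M: "M = (\<lambda>i j. l2inner (basis_vec i) (R (basis_vec j)))"
    by auto
  interpret positive_self_adjoint_op R
    using R by (simp add: density_op_iff)
  show "density_op (matop M)"
    unfolding M by (rule density_op_cong[OF R matop_matrix])
next
  assume "density_op (matop M)"
  then show "represents_state M"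
    unfolding represents_state_def using matop_basis_vec by blast
qed

lemma density_op_matrix_square_summable:
  assumes R: "density_op R"
  defines "M \<equiv> \<lambda>i j. l2inner (basis_vec i) (R (basis_vec j))"
  shows "(\<lambda>(i, j). (cmod (M i j))\<^sup>2) summable_on UNIV"
    and "(\<Sum>\<^sub>\<infinity>(i, j). (cmod (M i j))\<^sup>2) \<le> 1"
proof -
  interpret positive_self_adjoint_op R
    using R by (simp add: density_op_iff)
  define d where "d = (\<lambda>i. Re (M i i))"
  have "d sums 1"
    using sums_Re R by (fastforce simp: d_def M_def density_op_def)
  moreover have "(cmod (M i j))\<^sup>2 \<le> d i * d j" for i j
    using form_Cauchy_Schwarz[OF basis_vec_l2 basis_vec_l2, of i j] by (simp add: d_def M_def)
  ultimately show "(\<lambda>(i, j). (cmod (M i j))\<^sup>2) summable_on UNIV"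
    and "(\<Sum>\<^sub>\<infinity>(i, j). (cmod (M i j))\<^sup>2) \<le> 1"
    using summable_on_le_products[of d 1 "\<lambda>(i, j). (cmod (M i j))\<^sup>2"] form_nonneg[OF basis_vec_l2]
    by (auto simp: d_def M_def)
qed

lemma positive_self_adjoint_op_if_sqrt:
  assumes "is_sqrt_op S T" shows "positive_self_adjoint_op T"
proof -
  interpret S: positive_self_adjoint_op S
    using assms by (simp add: is_sqrt_op_def positive_self_adjoint_op_def)
  have T: "\<And>x. x \<in> l2 \<Longrightarrow> T x = S (S x)"
    using assms by (simp add: is_sqrt_op_def)
  note S_lin = op_on_l2D[OF S.linear]
  show ?thesis
  proof
    show "op_on_l2 T"
      unfolding op_on_l2_def
      using T S_lin S.maps_l2 l2_add l2_scale by auto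
    show "positive_op T"
      unfolding positive_op_def
      using T S.inner_commute S.maps_l2 l2inner_self by auto
    show "self_adjoint_op T"
      unfolding self_adjoint_op_def
      using T S.inner_commute S.maps_l2 by auto
  qed
qed

theorem theorem2p2:
  fixes M :: "nat \<Rightarrow> nat \<Rightarrow> complex"
  shows "represents_state M \<longleftrightarrow>
    ((\<lambda>(i, j). (cmod (M i j))\<^sup>2) summable_on UNIV
       \<and> (\<Sum>\<^sub>\<infinity>(i, j). (cmod (M i j))\<^sup>2) \<le> 1)
    \<and> (\<forall>i j. M i j = cnj (M j i))
    \<and> (\<exists>S. op_norm_tendsto (sqrt_partial (matop M)) S \<and> is_sqrt_op S (matop M))
    \<and> (\<lambda>i. M i i) sums 1"
proof
  assume "represents_state M"
  then have R: "density_op (matop M)"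
    by (simp add: represents_state_iff_density_op_matop)
  interpret effect_op "matop M"
    by (rule effect_op_if_density_op[OF R])
  show "((\<lambda>(i, j). (cmod (M i j))\<^sup>2) summable_on UNIV
       \<and> (\<Sum>\<^sub>\<infinity>(i, j). (cmod (M i j))\<^sup>2) \<le> 1)
    \<and> (\<forall>i j. M i j = cnj (M j i))
    \<and> (\<exists>S. op_norm_tendsto (sqrt_partial (matop M)) S \<and> is_sqrt_op S (matop M))
    \<and> (\<lambda>i. M i i) sums 1"
    using density_op_matrix_square_summable[OF R, unfolded matop_basis_vec]
      matrix_hermitian[unfolded matop_basis_vec] sqrt_partial_tendsto is_sqrt_op_sqrt_op
      R[unfolded density_op_def matop_basis_vec]
    by blast
next
  assume "((\<lambda>(i, j). (cmod (M i j))\<^sup>2) summable_on UNIV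
       \<and> (\<Sum>\<^sub>\<infinity>(i, j). (cmod (M i j))\<^sup>2) \<le> 1)
    \<and> (\<forall>i j. M i j = cnj (M j i))
    \<and> (\<exists>S. op_norm_tendsto (sqrt_partial (matop M)) S \<and> is_sqrt_op S (matop M))
    \<and> (\<lambda>i. M i i) sums 1"
  then obtain S where "is_sqrt_op S (matop M)" and "(\<lambda>i. M i i) sums 1"
    by blast
  then have "density_op (matop M)"
    by (auto simp: density_op_iff matop_basis_vec dest: positive_self_adjoint_op_if_sqrt)
  then show "represents_state M"
    by (simp add: represents_state_iff_density_op_matop)
qed

end
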